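(* Let $L$ be a finite lattice and $\varphi\in M_\infty(L)$. Then for all $n\ge1$ and $a_1,\dots,a_n\in L$, $\Lambda_{a_1,\ldots,a_n}\varphi=\nabla_{a_1,\ldots,a_n}\varphi$.
   Context: $L$ is a finite lattice with meet $\wedge$ and join $\vee$. $\nabla_a\varphi(x)=\varphi(x)-\varphi(x\wedge a)$, $\nabla_{a_1,\ldots,a_n}\varphi=\nabla_{a_n}(\nabla_{a_1,\ldots,a_{n-1}}\varphi)$; $\varphi$ is completely monotone if all $\nabla_{a_1,\dots,a_n}\varphi\ge0$. $M_\infty(L)$ is the set of nonnegative completely monotone functions on $L$ (these are monotone). A path from $a$ to $b$ is a sequence $H=(h_0,\dots,h_m)$ of distinct elements with $h_0=a$, $h_m=b$; $\varphi(H)=\sum_{i=0}^m\varphi(h_i)-\sum_{i=1}^m\varphi(h_{i-1}\vee h_i)$; $\lambda(\varphi;a,b)=\max\{\varphi(H): H\text{ a path from }a\text{ to }b\}$; $\Lambda_a\varphi(x)=\varphi(x)-\lambda(\varphi;a,x)$ and $\Lambda_{a_1,\ldots,a_n}\varphi=\Lambda_{a_n}(\Lambda_{a_1,\ldots,a_{n-1}}\varphi)$. *)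

theory Defs
  imports Complex_Main
begin

definition nabla :: "'a::lattice \<Rightarrow> ('a \<Rightarrow> real) \<Rightarrow> 'a \<Rightarrow> real" where
  "nabla a \<phi> x = \<phi> x - \<phi> (inf x a)"

definition nablas :: "'a::lattice list \<Rightarrow> ('a \<Rightarrow> real) \<Rightarrow> 'a \<Rightarrow> real" where
  "nablas as \<phi> = foldl (\<lambda>\<psi> a. nabla a \<psi>) \<phi> as"

definition completely_monotone :: "('a::lattice \<Rightarrow> real) \<Rightarrow> bool" where
  "completely_monotone \<phi> \<longleftrightarrow> (\<forall>as x. as \<noteq> [] \<longrightarrow> nablas as \<phi> x \<ge> 0)"

definition M_infty :: "('a::{finite,lattice} \<Rightarrow> real) set" where
  "M_infty = {\<phi>. (\<forall>x. \<phi> x \<ge> 0) \<and> completely_monotone \<phi>}"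

definition paths :: "'a \<Rightarrow> 'a \<Rightarrow> 'a list set" where
  "paths a b = {H. H \<noteq> [] \<and> distinct H \<and> hd H = a \<and> last H = b}"

definition path_val :: "('a::lattice \<Rightarrow> real) \<Rightarrow> 'a list \<Rightarrow> real" where
  "path_val \<phi> H = (\<Sum>i<length H. \<phi> (H ! i)) - (\<Sum>i\<in>{1..<length H}. \<phi> (sup (H ! (i - 1)) (H ! i)))"

definition lam :: "('a::{finite,lattice} \<Rightarrow> real) \<Rightarrow> 'a \<Rightarrow> 'a \<Rightarrow> real" where
  "lam \<phi> a b = Max (path_val \<phi> ` paths a b)"

definition Lam :: "'a::{finite,lattice} \<Rightarrow> ('a \<Rightarrow> real) \<Rightarrow> 'a \<Rightarrow> real" where
  "Lam a \<phi> x = \<phi> x - lam \<phi> a x"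

definition Lams :: "'a::{finite,lattice} list \<Rightarrow> ('a \<Rightarrow> real) \<Rightarrow> 'a \<Rightarrow> real" where
  "Lams as \<phi> = foldl (\<lambda>\<psi> a. Lam a \<psi>) \<phi> as"

end

theory Submission
  imports Defs
begin

text \<open>
  For completely monotone \<open>\<phi>\<close>, monotonicity together with the supermodularity
  \<open>\<phi> a + \<phi> b \<le> \<phi> (a \<squnion> b) + \<phi> (a \<sqinter> b)\<close> (the second difference \<open>\<nabla>\<^sub>a\<^sub>,\<^sub>b \<phi> (a \<squnion> b) \<ge> 0\<close>)
  gives \<open>\<phi>(H) \<le> \<phi> (a \<sqinter> b)\<close> for every path \<open>H\<close> from \<open>a\<close> to \<open>b\<close>, by induction on \<open>H\<close>;
  the path \<open>a, a \<sqinter> b, b\<close> attains this bound. Hence \<open>\<lambda>(\<phi>; a, x) = \<phi> (x \<sqinter> a)\<close>, that is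
  \<open>\<Lambda>\<^sub>a \<phi> = \<nabla>\<^sub>a \<phi>\<close>, and since \<open>\<nabla>\<^sub>a\<close> maps \<open>M\<^sub>\<infinity>(L)\<close> into itself the identity iterates.
\<close>

lemma nablas_Cons: "nablas (a # as) \<phi> = nablas as (nabla a \<phi>)"
  by (simp add: nablas_def)

lemma Lams_Cons: "Lams (a # as) \<phi> = Lams as (Lam a \<phi>)"
  by (simp add: Lams_def)

lemma completely_monotone_mono:
  assumes "completely_monotone \<phi>" and "y \<le> x"
  shows "\<phi> y \<le> \<phi> x"
proof -
  have "nablas [y] \<phi> x \<ge> 0"
    using assms(1) unfolding completely_monotone_def by blast
  with assms(2) show ?thesis
    by (simp add: nablas_def nabla_def inf_absorb2)
qed

lemma completely_monotone_supermodular: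
  assumes "completely_monotone \<phi>"
  shows "\<phi> a + \<phi> b \<le> \<phi> (sup a b) + \<phi> (inf a b)"
proof -
  have "nablas [a, b] \<phi> (sup a b) \<ge> 0"
    using assms unfolding completely_monotone_def by blast
  then show ?thesis
    by (simp add: nablas_def nabla_def inf_absorb1 inf_absorb2 inf_commute)
qed

lemma M_infty_nabla:
  assumes "\<phi> \<in> M_infty"
  shows "nabla a \<phi> \<in> M_infty"
proof -
  have nablas_nonneg: "nablas (a # as) \<phi> x \<ge> 0" for as x
    using assms unfolding M_infty_def completely_monotone_def by blast
  from nablas_nonneg[of "[]"] have "nabla a \<phi> x \<ge> 0" for x
    by (simp add: nablas_def)
  with nablas_nonneg show ?thesis
    unfolding M_infty_def completely_monotone_def by (simp add: nablas_Cons)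
qed

lemma path_val_singleton [simp]: "path_val \<phi> [x] = \<phi> x"
  by (simp add: path_val_def)

lemma path_val_Cons_Cons [simp]:
  "path_val \<phi> (x # y # H) = \<phi> x - \<phi> (sup x y) + path_val \<phi> (y # H)"
  unfolding path_val_def length_Cons sum.lessThan_Suc_shift
  by (simp add: sum.atLeast_Suc_lessThan sum.shift_bounds_Suc_ivl del: sum.op_ivl_Suc)

lemma path_val_remdups_adj: "path_val \<phi> (remdups_adj H) = path_val \<phi> H"
  by (induction H rule: remdups_adj.induct) (auto simp: remdups_adj_Cons')

lemma path_val_le_inf_hd_last:
  assumes "completely_monotone \<phi>" and "H \<noteq> []"
  shows "path_val \<phi> H \<le> \<phi> (inf (hd H) (last H))"
  using assms(2)
proof (induction H rule: induct_list012)
  case (3 x y H)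
  define l where "l = last (y # H)"
  have "path_val \<phi> (y # H) \<le> \<phi> (inf y l)"
    using "3.IH"(2) by (simp add: l_def)
  moreover have "\<phi> x + \<phi> (inf y l) \<le> \<phi> (sup x (inf y l)) + \<phi> (inf x (inf y l))"
    using completely_monotone_supermodular[OF assms(1)] .
  moreover have "\<phi> (sup x (inf y l)) \<le> \<phi> (sup x y)"
    by (rule completely_monotone_mono[OF assms(1)]) (simp add: le_supI2)
  moreover have "\<phi> (inf x (inf y l)) \<le> \<phi> (inf x l)"
    by (rule completely_monotone_mono[OF assms(1)]) (simp add: le_infI2)
  ultimately have "path_val \<phi> (x # y # H) \<le> \<phi> (inf x l)"
    unfolding path_val_Cons_Cons by linarith
  then show ?case
    by (simp add: l_def)
qed simp_all

lemma finite_paths: "finite (paths (a :: 'a :: finite) b)"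
proof (rule finite_subset)
  show "paths a b \<subseteq> {H. set H \<subseteq> UNIV \<and> length H \<le> card (UNIV :: 'a set)}"
    by (auto simp: paths_def distinct_card[symmetric] card_mono)
qed (rule finite_lists_length_le, simp)

text \<open>The list \<open>[a, x \<sqinter> a, x]\<close> repeats an entry when \<open>a\<close> and \<open>x\<close> are comparable;
  collapsing adjacent repetitions makes it a path without changing its value.\<close>

lemma inf_path_in_paths: "remdups_adj [a, inf x a, x] \<in> paths a (x :: 'a :: lattice)"
  by (auto simp: paths_def inf_absorb1)

lemma path_val_inf_path: "path_val \<phi> (remdups_adj [a, inf x a, x]) = \<phi> (inf x a)"
  by (simp only: path_val_remdups_adj) (simp add: sup_absorb1 sup_absorb2)

lemma lam_eq_inf:
  assumes "completely_monotone \<phi>"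
  shows "lam \<phi> a x = \<phi> (inf x a)"
  unfolding lam_def
proof (rule Max_eqI)
  show "finite (path_val \<phi> ` paths a x)"
    by (simp add: finite_paths)
  show "\<phi> (inf x a) \<in> path_val \<phi> ` paths a x"
    by (rule image_eqI[where x = "remdups_adj [a, inf x a, x]"])
      (simp_all only: path_val_inf_path inf_path_in_paths)
  fix v
  assume "v \<in> path_val \<phi> ` paths a x"
  then obtain H where H: "H \<in> paths a x" and v: "v = path_val \<phi> H"
    by blast
  from H have "H \<noteq> []" "hd H = a" "last H = x"
    by (simp_all add: paths_def)
  then have "path_val \<phi> H \<le> \<phi> (inf a x)"
    using path_val_le_inf_hd_last[OF assms \<open>H \<noteq> []\<close>] by (simp only:)
  then show "v \<le> \<phi> (inf x a)"
    unfolding v by (simp only: inf.commute[of x a])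
qed

lemma Lam_eq_nabla:
  assumes "completely_monotone \<phi>"
  shows "Lam a \<phi> = nabla a \<phi>"
  using lam_eq_inf[OF assms] by (simp add: fun_eq_iff Lam_def nabla_def)

lemma Lams_eq_nablas: "\<phi> \<in> M_infty \<Longrightarrow> Lams as \<phi> = nablas as \<phi>"
proof (induction as arbitrary: \<phi>)
  case Nil
  then show ?case by (simp add: Lams_def nablas_def)
next
  case (Cons a as)
  have "Lam a \<phi> = nabla a \<phi>"
    using Cons.prems by (simp add: Lam_eq_nabla M_infty_def)
  then have "Lams (a # as) \<phi> = Lams as (nabla a \<phi>)"
    by (simp only: Lams_Cons)
  also have "\<dots> = nablas as (nabla a \<phi>)"
    using Cons.IH M_infty_nabla[OF Cons.prems] .
  finally show ?case
    by (simp only: nablas_Cons)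
qed

theorem lemma3p16:
  fixes \<phi> :: "'a::{finite,lattice} \<Rightarrow> real" and as :: "'a list"
  assumes "\<phi> \<in> M_infty"
    and "as \<noteq> []"
  shows "Lams as \<phi> = nablas as \<phi>"
  using Lams_eq_nablas[OF assms(1)] .

end
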